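(* Let $(S,\ast)$ be an adequate partial semigroup and let $A\subseteq S$. If there is an idempotent $p\in\overline{A}\cap J_\delta(S)$, then there is a nonempty set $T$ of functions such that (i) for all $f\in T$, $\mathrm{domain}(f)\in\omega$ and $\mathrm{range}(f)\subseteq A$; (ii) for all $f\in T$ and all $x\in B_f(T)$, $B_{f^\frown x}(T)\subseteq x^{-1}B_f(T)$; (iii) for all $F\in\mathcal{P}_f(T)$, $\bigcap_{f\in F}B_f(T)$ is a $J_\delta$-set. Moreover, there is a downward directed family $\langle A_F\rangle_{F\in I}$ of subsets of $A$ such that (a) for all $F\in I$ and all $x\in A_F$ there exists $G\in I$ with $A_G\subseteq x^{-1}A_F$; (b) for each $\mathcal{F}\in\mathcal{P}_f(I)$, $\bigcap_{F\in\mathcal{F}}A_F$ is a $J_\delta$-set.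
   Context: A partial semigroup is a pair $(S,\ast)$ where $\ast$ is an operation defined on a subset of $S\times S$ such that $(x\ast y)\ast z=x\ast(y\ast z)$ in the sense that if either side is defined, so is the other and they are equal. $\phi_S(s)=\{t: s\ast t\text{ defined}\}$, $\sigma_S(H)=\bigcap_{s\in H}\phi_S(s)$ for $H\in\mathcal{P}_f(S)$ (finite nonempty subsets); $S$ is adequate if all $\sigma_S(H)\ne\emptyset$. $\overline{A}=\{p\in\beta S: A\in p\}$. $\delta S=\bigcap_{x\in S}\overline{\phi_S(x)}$, with operation $p\ast q=\{B\subseteq S:\{s: s^{-1}B\in q\}\in p\}$, where $s^{-1}B=\{t\in\phi_S(s): s\ast t\in B\}$. A sequence $\langle y_n\rangle$ in $S$ is adequate if $\prod_{n\in F}y_n$ is defined for every $F\in\mathcal{P}_f(\mathbb{N})$ and for every $K\in\mathcal{P}_f(S)$ there is $m$ with $\prod_{n\in F}y_n\in\sigma_S(K)$ whenever $\min F\ge m$; $\mathcal{T}_S$ is the set of adequate sequences. For $W\in\mathcal{P}_f(S)$, $a\in S$, $W\ast a=\{w\ast a: w\in W,\ w\ast a\text{ defined}\}$. $B\subseteq S$ is a $J_\delta$-set if for every $F\in\mathcal{P}_f(\mathcal{T}_S)$ and $W\in\mathcal{P}_f(S)$ there exist $a\in\sigma_S(W)$ and $H\in\mathcal{P}_f(\mathbb{N})$ with $\prod_{t\in H}f(t)\in\sigma_S(W\ast a)$ and $a\ast\prod_{t\in H}f(t)\in B$ for each $f\in F$; $J_\delta(S)=\{p\in\delta S:\text{every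 member of }p\text{ is a }J_\delta\text{-set}\}$. $\omega$ is the first infinite ordinal, $[n]=\{0,\dots,n-1\}$. For $f$ with domain $[n]$ and $x\in S$, $f^\frown x=f\cup\{(n,x)\}$. For a set $T$ of such functions and $f\in T$, $B_f(T)=\{x: f^\frown x\in T\}$. A family $\langle A_F\rangle_{F\in I}$ is downward directed if for all $F,G\in I$ there is $H\in I$ with $A_H\subseteq A_F\cap A_G$. *)

theory Defs
  imports Main
begin

text \<open>A partial operation on the type 'a (the type plays the role of S):
  mult s t = Some (s * t) if defined, None otherwise.\<close>
type_synonym 'a pop = "'a \<Rightarrow> 'a \<Rightarrow> 'a option"

definition partial_semigroup :: "'a pop \<Rightarrow> bool" where
  "partial_semigroup mult \<longleftrightarrow>
     (\<forall>x y z. Option.bind (mult x y) (\<lambda>w. mult w z) = Option.bind (mult y z) (\<lambda>w. mult x w))"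

definition phi :: "'a pop \<Rightarrow> 'a \<Rightarrow> 'a set" where
  "phi mult s = {t. mult s t \<noteq> None}"

definition sigma :: "'a pop \<Rightarrow> 'a set \<Rightarrow> 'a set" where
  "sigma mult H = (\<Inter>s\<in>H. phi mult s)"

definition adequate :: "'a pop \<Rightarrow> bool" where
  "adequate mult \<longleftrightarrow> (\<forall>H. finite H \<and> H \<noteq> {} \<longrightarrow> sigma mult H \<noteq> {})"

definition is_ultrafilter :: "'a set set \<Rightarrow> bool" where
  "is_ultrafilter p \<longleftrightarrow>
     {} \<notin> p \<and> UNIV \<in> p \<and>
     (\<forall>B C. B \<in> p \<and> C \<in> p \<longrightarrow> B \<inter> C \<in> p) \<and>
     (\<forall>B C. B \<in> p \<and> B \<subseteq> C \<longrightarrow> C \<in> p) \<and>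
     (\<forall>B. B \<in> p \<or> - B \<in> p)"

definition deltaS :: "'a pop \<Rightarrow> 'a set set set" where
  "deltaS mult = {p. is_ultrafilter p \<and> (\<forall>x. phi mult x \<in> p)}"

definition linv :: "'a pop \<Rightarrow> 'a \<Rightarrow> 'a set \<Rightarrow> 'a set" where
  "linv mult s B = {t. \<exists>u. mult s t = Some u \<and> u \<in> B}"

definition umult :: "'a pop \<Rightarrow> 'a set set \<Rightarrow> 'a set set \<Rightarrow> 'a set set" where
  "umult mult p q = {B. {s. linv mult s B \<in> q} \<in> p}"

fun lprod :: "'a pop \<Rightarrow> 'a list \<Rightarrow> 'a option" where
  "lprod mult [] = None"
| "lprod mult [a] = Some a"
| "lprod mult (a # b # xs) = Option.bind (lprod mult (b # xs)) (\<lambda>w. mult a w)"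

definition fprod :: "'a pop \<Rightarrow> (nat \<Rightarrow> 'a) \<Rightarrow> nat set \<Rightarrow> 'a option" where
  "fprod mult y F = lprod mult (map y (sorted_list_of_set F))"

definition adequate_seq :: "'a pop \<Rightarrow> (nat \<Rightarrow> 'a) \<Rightarrow> bool" where
  "adequate_seq mult y \<longleftrightarrow>
     (\<forall>F. finite F \<and> F \<noteq> {} \<longrightarrow> fprod mult y F \<noteq> None) \<and>
     (\<forall>K. finite K \<and> K \<noteq> {} \<longrightarrow>
        (\<exists>m. \<forall>F. finite F \<and> F \<noteq> {} \<and> Min F \<ge> m \<longrightarrow>
               (\<exists>u. fprod mult y F = Some u \<and> u \<in> sigma mult K)))"

definition rtimes :: "'a pop \<Rightarrow> 'a set \<Rightarrow> 'a \<Rightarrow> 'a set" where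
  "rtimes mult W a = {v. \<exists>w\<in>W. mult w a = Some v}"

definition Jdelta_set :: "'a pop \<Rightarrow> 'a set \<Rightarrow> bool" where
  "Jdelta_set mult B \<longleftrightarrow>
     (\<forall>F W. finite F \<and> F \<noteq> {} \<and> (\<forall>f\<in>F. adequate_seq mult f) \<and> finite W \<and> W \<noteq> {} \<longrightarrow>
        (\<exists>a\<in>sigma mult W. \<exists>H. finite H \<and> H \<noteq> {} \<and>
           (\<forall>f\<in>F. \<exists>u. fprod mult f H = Some u \<and> u \<in> sigma mult (rtimes mult W a) \<and>
                        (\<exists>v. mult a u = Some v \<and> v \<in> B))))"

definition Jdelta :: "'a pop \<Rightarrow> 'a set set set" where
  "Jdelta mult = {p \<in> deltaS mult. \<forall>B\<in>p. Jdelta_set mult B}"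

text \<open>Functions with domain [n] are represented as lists of length n;
  f\<frown>x is f @ [x], and B_f(T) = {x. f @ [x] \<in> T}.\<close>
definition Bf :: "'a list \<Rightarrow> 'a list set \<Rightarrow> 'a set" where
  "Bf f T = {x. f @ [x] \<in> T}"

end

theory Submission
  imports Defs
begin

(* Since p is an idempotent ultrafilter, every D in p contains the set
   star D = {y in D. y^-1 D in p}, which again lies in p and satisfies
   star (y^-1 D) <= y^-1 (star D) by associativity. Starting from star A and
   passing from a node D along x in D to star (x^-1 D \<inter> A) yields a tree all of
   whose branching sets lie in p; being members of p they are J_delta-sets.
   The directed family is indexed by the finite subsets F of the tree, with A_F
   the intersection of the branching sets B_f(T) for f in F. *)

lemma INT_linv_subset:
  assumes "F \<noteq> {}"
  shows "(\<Inter>f\<in>F. linv mult x (B f)) \<subseteq> linv mult x (\<Inter>f\<in>F. B f)"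
proof
  fix t assume t: "t \<in> (\<Inter>f\<in>F. linv mult x (B f))"
  obtain f\<^sub>0 where "f\<^sub>0 \<in> F" using assms by blast
  then obtain u where u: "mult x t = Some u" using t unfolding linv_def by blast
  have "u \<in> B f" if "f \<in> F" for f using t that u unfolding linv_def by auto
  then show "t \<in> linv mult x (\<Inter>f\<in>F. B f)" using u unfolding linv_def by blast
qed

lemma linv_linv_subset:
  assumes "partial_semigroup mult" "mult y z = Some u"
  shows "linv mult z (linv mult y D) \<subseteq> linv mult u D"
proof
  fix w assume "w \<in> linv mult z (linv mult y D)"
  then obtain zw v where zw: "mult z w = Some zw" and v: "mult y zw = Some v" "v \<in> D"
    unfolding linv_def by auto
  have "Option.bind (mult y z) (\<lambda>t. mult t w) = Option.bind (mult z w) (\<lambda>t. mult y t)"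
    using assms(1) unfolding partial_semigroup_def by blast
  then have "mult u w = Some v" using assms(2) zw v by simp
  then show "w \<in> linv mult u D" using v unfolding linv_def by auto
qed

inductive_set tree :: "('a list \<Rightarrow> 'a set) \<Rightarrow> 'a list set" for C where
  Nil: "[] \<in> tree C"
| snoc: "f \<in> tree C \<Longrightarrow> x \<in> C f \<Longrightarrow> f @ [x] \<in> tree C"

lemma snoc_mem_treeD: "f @ [x] \<in> tree C \<Longrightarrow> x \<in> C f"
  by (cases rule: tree.cases) auto

lemma Bf_tree: "f \<in> tree C \<Longrightarrow> Bf f (tree C) = C f"
  unfolding Bf_def by (auto dest: snoc_mem_treeD intro: tree.snoc)

lemma directed_family_of_tree:
  fixes T :: "'a list set"
  assumes "T \<noteq> {}"
    and range: "\<forall>f\<in>T. set f \<subseteq> A"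
    and branch: "\<forall>f\<in>T. \<forall>x\<in>Bf f T. Bf (f @ [x]) T \<subseteq> linv mult x (Bf f T)"
    and large: "\<forall>F. finite F \<and> F \<noteq> {} \<and> F \<subseteq> T \<longrightarrow> P (\<Inter>f\<in>F. Bf f T)"
  shows "\<exists>(I :: 'a list set set) (AF :: 'a list set \<Rightarrow> 'a set). I \<noteq> {} \<and>
            (\<forall>F\<in>I. \<forall>G\<in>I. \<exists>H\<in>I. AF H \<subseteq> AF F \<inter> AF G) \<and>
            (\<forall>F\<in>I. AF F \<subseteq> A) \<and>
            (\<forall>F\<in>I. \<forall>x\<in>AF F. \<exists>G\<in>I. AF G \<subseteq> linv mult x (AF F)) \<and>
            (\<forall>\<F>. finite \<F> \<and> \<F> \<noteq> {} \<and> \<F> \<subseteq> I \<longrightarrow> P (\<Inter>F\<in>\<F>. AF F))"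
proof -
  define I where "I = {F. finite F \<and> F \<noteq> {} \<and> F \<subseteq> T}"
  define AF where "AF F = (\<Inter>f\<in>F. Bf f T)" for F
  show ?thesis
  proof (intro exI[of _ I] exI[of _ AF] conjI ballI allI impI)
    obtain t where "t \<in> T" using \<open>T \<noteq> {}\<close> by blast
    then have "{t} \<in> I" unfolding I_def by simp
    then show "I \<noteq> {}" by blast
  next
    fix F G assume "F \<in> I" "G \<in> I"
    then have "F \<union> G \<in> I" "AF (F \<union> G) = AF F \<inter> AF G"
      unfolding I_def AF_def by auto
    then show "\<exists>H\<in>I. AF H \<subseteq> AF F \<inter> AF G" by blast
  next
    fix F assume "F \<in> I"
    then obtain f where "f \<in> F" unfolding I_def by blast
    then have "AF F \<subseteq> Bf f T" unfolding AF_def by blast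
    also have "\<dots> \<subseteq> A" using range unfolding Bf_def by fastforce
    finally show "AF F \<subseteq> A" .
  next
    fix F x assume F: "F \<in> I" and x: "x \<in> AF F"
    let ?G = "(\<lambda>f. f @ [x]) ` F"
    have "AF ?G = (\<Inter>f\<in>F. Bf (f @ [x]) T)" unfolding AF_def by simp
    also have "\<dots> \<subseteq> (\<Inter>f\<in>F. linv mult x (Bf f T))"
    proof (rule INT_anti_mono[OF subset_refl])
      fix f assume "f \<in> F"
      then have "f \<in> T" "x \<in> Bf f T" using F x unfolding I_def AF_def by auto
      then show "Bf (f @ [x]) T \<subseteq> linv mult x (Bf f T)" using branch by blast
    qed
    also have "\<dots> \<subseteq> linv mult x (AF F)"
      unfolding AF_def by (rule INT_linv_subset) (use F in \<open>simp add: I_def\<close>)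
    finally have "AF ?G \<subseteq> linv mult x (AF F)" .
    moreover have "?G \<in> I" using F x unfolding I_def AF_def Bf_def by auto
    ultimately show "\<exists>G\<in>I. AF G \<subseteq> linv mult x (AF F)" by blast
  next
    fix \<F> assume \<F>: "finite \<F> \<and> \<F> \<noteq> {} \<and> \<F> \<subseteq> I"
    have "finite (\<Union>\<F>)" "\<Union>\<F> \<subseteq> T" using \<F> unfolding I_def by auto
    moreover have "\<Union>\<F> \<noteq> {}" using \<F> unfolding I_def by blast
    ultimately have "P (\<Inter>f\<in>\<Union>\<F>. Bf f T)" using large by blast
    moreover have "(\<Inter>f\<in>\<Union>\<F>. Bf f T) = (\<Inter>F\<in>\<F>. AF F)" unfolding AF_def by blast
    ultimately show "P (\<Inter>F\<in>\<F>. AF F)" by simp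
  qed
qed

definition star_set :: "'a pop \<Rightarrow> 'a set set \<Rightarrow> 'a set \<Rightarrow> 'a set" where
  "star_set mult p D = {y\<in>D. linv mult y D \<in> p}"

definition star_closed :: "'a pop \<Rightarrow> 'a set set \<Rightarrow> 'a set \<Rightarrow> bool" where
  "star_closed mult p D \<longleftrightarrow> D \<in> p \<and> (\<forall>x\<in>D. linv mult x D \<in> p)"

lemma star_set_subset: "star_set mult p D \<subseteq> D"
  unfolding star_set_def by auto

locale idempotent_ultrafilter =
  fixes mult :: "'a pop" and p :: "'a set set"
  assumes partial_semigroup: "partial_semigroup mult"
    and ultrafilter: "is_ultrafilter p"
    and idempotent: "umult mult p p = p"
begin

lemma Int_mem: "B \<in> p \<Longrightarrow> C \<in> p \<Longrightarrow> B \<inter> C \<in> p"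
  using ultrafilter unfolding is_ultrafilter_def by blast

lemma superset_mem: "B \<in> p \<Longrightarrow> B \<subseteq> C \<Longrightarrow> C \<in> p"
  using ultrafilter unfolding is_ultrafilter_def by blast

lemma INT_mem: "finite F \<Longrightarrow> F \<noteq> {} \<Longrightarrow> \<forall>f\<in>F. B f \<in> p \<Longrightarrow> (\<Inter>f\<in>F. B f) \<in> p"
  by (induction F rule: finite_ne_induct) (auto intro: Int_mem)

lemma star_set_mem:
  assumes "D \<in> p"
  shows "star_set mult p D \<in> p"
proof -
  have "{s. linv mult s D \<in> p} \<in> p" using assms idempotent unfolding umult_def by blast
  then have "D \<inter> {s. linv mult s D \<in> p} \<in> p" using assms Int_mem by blast
  moreover have "D \<inter> {s. linv mult s D \<in> p} = star_set mult p D"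
    unfolding star_set_def by auto
  ultimately show ?thesis by simp
qed

lemma star_set_linv_subset:
  assumes y: "y \<in> star_set mult p D"
  shows "star_set mult p (linv mult y D) \<subseteq> linv mult y (star_set mult p D)"
proof
  fix z assume "z \<in> star_set mult p (linv mult y D)"
  then have z: "z \<in> linv mult y D" and zD: "linv mult z (linv mult y D) \<in> p"
    unfolding star_set_def by auto
  then obtain u where u: "mult y z = Some u" "u \<in> D" unfolding linv_def by auto
  have "linv mult u D \<in> p"
    using superset_mem[OF zD linv_linv_subset[OF partial_semigroup u(1)]] .
  then show "z \<in> linv mult y (star_set mult p D)"
    using u unfolding star_set_def linv_def by auto
qed

lemma star_closed_star_set:
  assumes "D \<in> p"
  shows "star_closed mult p (star_set mult p D)"
  unfolding star_closed_def
proof (intro conjI ballI)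
  show "star_set mult p D \<in> p" using assms by (rule star_set_mem)
  fix y assume y: "y \<in> star_set mult p D"
  then have "linv mult y D \<in> p" unfolding star_set_def by simp
  then have "star_set mult p (linv mult y D) \<in> p" by (rule star_set_mem)
  then show "linv mult y (star_set mult p D) \<in> p"
    using star_set_linv_subset[OF y] superset_mem by blast
qed

definition node_set :: "'a set \<Rightarrow> 'a list \<Rightarrow> 'a set" where
  "node_set A f = foldl (\<lambda>D x. star_set mult p (linv mult x D \<inter> A)) (star_set mult p A) f"

lemma node_set_snoc:
  "node_set A (f @ [x]) = star_set mult p (linv mult x (node_set A f) \<inter> A)"
  unfolding node_set_def by simp

lemma node_set_subset: "node_set A f \<subseteq> A"
proof (cases f rule: rev_cases)
  case Nil
  then show ?thesis using star_set_subset by (simp add: node_set_def)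
next
  case (snoc g x)
  then show ?thesis
    using star_set_subset[of mult p "linv mult x (node_set A g) \<inter> A"]
    by (simp add: node_set_snoc)
qed

lemma star_closed_node_set:
  assumes "A \<in> p" "f \<in> tree (node_set A)"
  shows "star_closed mult p (node_set A f)"
  using assms(2)
proof (induction rule: tree.induct)
  case Nil
  show ?case using star_closed_star_set[OF assms(1)] by (simp add: node_set_def)
next
  case (snoc f x)
  then have "linv mult x (node_set A f) \<inter> A \<in> p"
    using assms(1) Int_mem unfolding star_closed_def by blast
  then show ?case unfolding node_set_snoc by (rule star_closed_star_set)
qed

lemma tree_of_idempotent:
  assumes "A \<in> p"
  shows "\<exists>T :: 'a list set. T \<noteq> {} \<and>
            (\<forall>f\<in>T. set f \<subseteq> A) \<and>
            (\<forall>f\<in>T. \<forall>x\<in>Bf f T. Bf (f @ [x]) T \<subseteq> linv mult x (Bf f T)) \<and>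
            (\<forall>F. finite F \<and> F \<noteq> {} \<and> F \<subseteq> T \<longrightarrow> (\<Inter>f\<in>F. Bf f T) \<in> p)"
proof -
  let ?T = "tree (node_set A)"
  have "?T \<noteq> {}" using tree.Nil by blast
  moreover have "\<forall>f\<in>?T. set f \<subseteq> A"
  proof
    fix f assume "f \<in> ?T"
    then show "set f \<subseteq> A"
      by (induction rule: tree.induct) (use node_set_subset in auto)
  qed
  moreover have "\<forall>f\<in>?T. \<forall>x\<in>Bf f ?T. Bf (f @ [x]) ?T \<subseteq> linv mult x (Bf f ?T)"
  proof (intro ballI)
    fix f x assume f: "f \<in> ?T" and "x \<in> Bf f ?T"
    then have x: "x \<in> node_set A f" by (simp add: Bf_tree)
    have "Bf (f @ [x]) ?T = star_set mult p (linv mult x (node_set A f) \<inter> A)"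
      by (simp add: Bf_tree[OF tree.snoc[OF f x]] node_set_snoc)
    also have "\<dots> \<subseteq> linv mult x (node_set A f)"
      by (rule subset_trans[OF star_set_subset Int_lower1])
    finally show "Bf (f @ [x]) ?T \<subseteq> linv mult x (Bf f ?T)"
      by (simp add: Bf_tree[OF f])
  qed
  moreover have "\<forall>F. finite F \<and> F \<noteq> {} \<and> F \<subseteq> ?T \<longrightarrow> (\<Inter>f\<in>F. Bf f ?T) \<in> p"
  proof (intro allI impI)
    fix F assume F: "finite F \<and> F \<noteq> {} \<and> F \<subseteq> ?T"
    have "Bf f ?T \<in> p" if "f \<in> F" for f
    proof -
      from that F have f: "f \<in> ?T" by blast
      show ?thesis
        using star_closed_node_set[OF assms f] by (simp add: Bf_tree[OF f] star_closed_def)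
    qed
    then show "(\<Inter>f\<in>F. Bf f ?T) \<in> p" by (intro INT_mem) (use F in auto)
  qed
  ultimately show ?thesis by blast
qed

end

theorem theorem4p4:
  fixes mult :: "'a \<Rightarrow> 'a \<Rightarrow> 'a option" and A :: "'a set" and p :: "'a set set"
  assumes "partial_semigroup mult"
    and "adequate mult"
    and "A \<in> p"
    and "p \<in> Jdelta mult"
    and "umult mult p p = p"
  shows "(\<exists>T :: 'a list set. T \<noteq> {} \<and>
            (\<forall>f\<in>T. set f \<subseteq> A) \<and>
            (\<forall>f\<in>T. \<forall>x\<in>Bf f T. Bf (f @ [x]) T \<subseteq> linv mult x (Bf f T)) \<and>
            (\<forall>F. finite F \<and> F \<noteq> {} \<and> F \<subseteq> T \<longrightarrow> Jdelta_set mult (\<Inter>f\<in>F. Bf f T)))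
       \<and> (\<exists>(I :: 'a list set set) (AF :: 'a list set \<Rightarrow> 'a set). I \<noteq> {} \<and>
            (\<forall>F\<in>I. \<forall>G\<in>I. \<exists>H\<in>I. AF H \<subseteq> AF F \<inter> AF G) \<and>
            (\<forall>F\<in>I. AF F \<subseteq> A) \<and>
            (\<forall>F\<in>I. \<forall>x\<in>AF F. \<exists>G\<in>I. AF G \<subseteq> linv mult x (AF F)) \<and>
            (\<forall>\<F>. finite \<F> \<and> \<F> \<noteq> {} \<and> \<F> \<subseteq> I \<longrightarrow> Jdelta_set mult (\<Inter>F\<in>\<F>. AF F)))"
proof -
  have ultrafilter: "is_ultrafilter p" and Jdelta_mem: "\<And>B. B \<in> p \<Longrightarrow> Jdelta_set mult B"
    using assms(4) unfolding Jdelta_def deltaS_def by auto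
  interpret idempotent_ultrafilter mult p
    using assms(1,5) ultrafilter by unfold_locales
  obtain T :: "'a list set" where T: "T \<noteq> {}" "\<forall>f\<in>T. set f \<subseteq> A"
    "\<forall>f\<in>T. \<forall>x\<in>Bf f T. Bf (f @ [x]) T \<subseteq> linv mult x (Bf f T)"
    and T_mem: "\<forall>F. finite F \<and> F \<noteq> {} \<and> F \<subseteq> T \<longrightarrow> (\<Inter>f\<in>F. Bf f T) \<in> p"
    using tree_of_idempotent[OF assms(3)] by blast
  have T_Jdelta: "\<forall>F. finite F \<and> F \<noteq> {} \<and> F \<subseteq> T \<longrightarrow> Jdelta_set mult (\<Inter>f\<in>F. Bf f T)"
    using T_mem Jdelta_mem by blast
  show ?thesis
    using T T_Jdelta directed_family_of_tree[OF T T_Jdelta] by (intro conjI exI[of _ T]) assumption+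
qed

end
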